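(* For $n\ge1$ let \[\alpha_n=\inf\{s\in[-1,0):\ C_{a,R_n}(X)>0,\ C_{a,S_n}(X)>0,\ C_{a,T_n}(X)>0\ \text{for all }X\in(s,0)\}.\] Then $\alpha_{n+1}\le\alpha_n$ for all $n\ge1$. Moreover, $\alpha_{n+1}=\alpha_n$ if and only if one of the following holds: (a) $\alpha_m=-1$ for all $m\ge n$; in this case $C_a(X)>0$ for all $X\in(-1,1)$. (b) $\alpha_m=\alpha_n>-1$ for all $m\ge n$, and $C_{a,R_m}(\alpha_m)=C_{a,S_m}(\alpha_m)=C_{a,T_m}(\alpha_m)=0$ for all $m\ge n$; in this case $C_a(\alpha_n)=0$ and $C_a(X)>0$ for all $X\in(\alpha_n,1)$.
   Context: The Fibonacci substitution is $\sigma(a)=ab$, $\sigma(b)=a$; $w=w_0w_1\ldots=\lim_{m\to\infty}\sigma^m(a)$ is its fixed point starting with $a$, and $C_a(X)=\sum_{n\ge0}1_a(w_n)X^n$ (convergent for $|X|<1$). Let $A_n=\sigma^n(a)$, $B_n=\sigma^n(b)$, $R_n=A_{3n}B_{3n}$, $S_n=A_{3n}A_{3n}$, $T_n=B_{3n}A_{3n}$ (concatenations). For a finite word $u=u_0\cdots u_L$ over $\{a,b\}$, $C_{a,u}(X)=\sum_{i=0}^{L}1_a(u_i)X^i$, a polynomial evaluated at real $X$. *)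

theory Defs
  imports Complex_Main
begin

datatype letter = La | Lb

fun sigma_letter :: "letter \<Rightarrow> letter list" where
  "sigma_letter La = [La, Lb]"
| "sigma_letter Lb = [La]"

definition sigma :: "letter list \<Rightarrow> letter list" where
  "sigma u = concat (map sigma_letter u)"

definition fibA :: "nat \<Rightarrow> letter list" where
  "fibA n = (sigma ^^ n) [La]"

definition fibB :: "nat \<Rightarrow> letter list" where
  "fibB n = (sigma ^^ n) [Lb]"

definition fibR :: "nat \<Rightarrow> letter list" where
  "fibR n = fibA (3*n) @ fibB (3*n)"

definition fibS :: "nat \<Rightarrow> letter list" where
  "fibS n = fibA (3*n) @ fibA (3*n)"

definition fibT :: "nat \<Rightarrow> letter list" where
  "fibT n = fibB (3*n) @ fibA (3*n)"

text \<open>The fixed point w = lim sigma^m(a): since each A_m is a prefix of A_(m+1)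
  and length (A_(n+1)) > n, the n-th letter of w is the n-th letter of A_(n+1).\<close>
definition fibw :: "nat \<Rightarrow> letter" where
  "fibw n = fibA (Suc n) ! n"

definition ind_a :: "letter \<Rightarrow> real" where
  "ind_a c = (if c = La then 1 else 0)"

definition Ca :: "real \<Rightarrow> real" where
  "Ca X = (\<Sum>n. ind_a (fibw n) * X ^ n)"

definition Cau :: "letter list \<Rightarrow> real \<Rightarrow> real" where
  "Cau u X = (\<Sum>i<length u. ind_a (u ! i) * X ^ i)"

definition alpha :: "nat \<Rightarrow> real" where
  "alpha n = Inf {s \<in> {-1..<0}. \<forall>X\<in>{s<..<0}.
      Cau (fibR n) X > 0 \<and> Cau (fibS n) X > 0 \<and> Cau (fibT n) X > 0}"

end

theory Submission
  imports Defs
begin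

text \<open>Every block of level k + 1 (R' = R S T T, S' = R S T T R, T' = R S T R) is R_k followed by
  blocks of level k, and all blocks have even length, so in C_(a,uv)(X) = C_(a,u)(X) +
  X^|u| C_(a,v)(X) the weight X^|u| is never negative. Hence positivity of the three polynomials
  passes from level k to level k + 1, which gives alpha (k + 1) <= alpha k. At a = alpha k the
  level-k values are nonnegative by continuity; if alpha (k + 1) = alpha k > -1, the level-(k + 1)
  values cannot all be positive at a (by openness they would stay positive a little to the left),
  so one of these sums of nonnegative terms with positive weights vanishes, forcing all three
  level-k values to vanish at a. Vanishing propagates to all higher levels, which pins
  alpha m = a. Finally R_k = A_(3k+1) is a prefix of w, so C_a is the limit of C_(a,R_k), and these
  partial sums increase with k wherever the blocks are nonnegative.\<close>

lemma sigma_append: "sigma (u @ v) = sigma u @ sigma v"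
  by (simp add: sigma_def)

lemma funpow_sigma_append: "(sigma ^^ m) (u @ v) = (sigma ^^ m) u @ (sigma ^^ m) v"
  by (induction m) (simp_all add: sigma_append)

lemma fibA_0 [simp]: "fibA 0 = [La]" and fibB_0 [simp]: "fibB 0 = [Lb]"
  by (simp_all add: fibA_def fibB_def)

lemma fibA_Suc: "fibA (Suc m) = fibA m @ fibB m"
proof -
  have "fibA (Suc m) = (sigma ^^ m) ([La] @ [Lb])"
    by (simp add: fibA_def funpow_Suc_right sigma_def del: funpow.simps)
  then show ?thesis
    by (simp only: funpow_sigma_append fibA_def fibB_def)
qed

lemma fibB_Suc: "fibB (Suc m) = fibA m"
  by (simp add: fibA_def fibB_def funpow_Suc_right sigma_def del: funpow.simps)

lemma fibA_Suc_Suc_Suc: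
  "fibA (Suc (Suc (Suc m))) = fibA m @ fibB m @ fibA m @ fibA m @ fibB m"
  and fibB_Suc_Suc_Suc: "fibB (Suc (Suc (Suc m))) = fibA m @ fibB m @ fibA m"
  by (simp_all add: fibA_Suc fibB_Suc)

lemma three_mult_Suc: "3 * Suc k = Suc (Suc (Suc (3 * k)))"
  by simp

lemma fibR_Suc: "fibR (Suc k) = concat [fibR k, fibS k, fibT k, fibT k]"
  and fibS_Suc: "fibS (Suc k) = concat [fibR k, fibS k, fibT k, fibT k, fibR k]"
  and fibT_Suc: "fibT (Suc k) = concat [fibR k, fibS k, fibT k, fibR k]"
  unfolding fibR_def fibS_def fibT_def three_mult_Suc fibA_Suc_Suc_Suc fibB_Suc_Suc_Suc
  by simp_all

text \<open>The lengths of A_m and B_m are the Fibonacci numbers F_(m+2) and F_(m+1), which are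
  even exactly when the index is divisible by 3; this is why the blocks are built from A_(3n).\<close>
lemma odd_length_fibA_fibB: "odd (length (fibA (3 * k))) \<and> odd (length (fibB (3 * k)))"
proof (induction k)
  case (Suc k)
  then show ?case
    unfolding three_mult_Suc fibA_Suc_Suc_Suc fibB_Suc_Suc_Suc by simp
qed simp

lemma fibA_ne_Nil: "fibA m \<noteq> []"
  by (induction m) (simp_all add: fibA_Suc)

lemma fibB_ne_Nil: "fibB m \<noteq> []"
  by (cases m) (simp_all add: fibB_Suc fibA_ne_Nil)

lemma length_fibA_gt: "m < length (fibA m)"
proof (induction m)
  case (Suc m)
  moreover have "0 < length (fibB m)"
    using fibB_ne_Nil by simp
  ultimately show ?case
    unfolding fibA_Suc length_append by linarith
qed simp

lemma fibA_hd: "\<exists>v. fibA m = La # v"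
  by (induction m) (auto simp: fibA_Suc)

lemma fibA_extends: "m \<le> m' \<Longrightarrow> \<exists>v. fibA m' = fibA m @ v"
proof (induction m' rule: dec_induct)
  case (step m')
  then show ?case by (auto simp: fibA_Suc)
qed simp

lemma fibw_eq_nth_fibA: "i < length (fibA m) \<Longrightarrow> fibw i = fibA m ! i"
proof -
  assume i: "i < length (fibA m)"
  obtain v v' where v: "fibA (max m (Suc i)) = fibA m @ v"
    and v': "fibA (max m (Suc i)) = fibA (Suc i) @ v'"
    using fibA_extends[of m "max m (Suc i)"] fibA_extends[of "Suc i" "max m (Suc i)"] by auto
  have "fibA (max m (Suc i)) ! i = fibA m ! i"
    using i by (simp add: v nth_append)
  moreover have "fibA (max m (Suc i)) ! i = fibA (Suc i) ! i"
    using length_fibA_gt[of "Suc i"] by (simp add: v' nth_append)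
  ultimately show ?thesis
    by (simp add: fibw_def)
qed

lemma Cau_Nil [simp]: "Cau [] X = 0"
  by (simp add: Cau_def)

lemma Cau_Cons [simp]: "Cau (c # u) X = ind_a c + X * Cau u X"
  unfolding Cau_def length_Cons sum.lessThan_Suc_shift
  by (simp add: sum_distrib_left mult_ac)

lemma Cau_append: "Cau (u @ v) X = Cau u X + X ^ length u * Cau v X"
  by (induction u) (simp_all add: algebra_simps)

lemma isCont_Cau: "isCont (Cau u) x"
  unfolding Cau_def by (intro continuous_intros)

lemma Cau_append_ge:
  assumes "even (length u)" "0 \<le> Cau v X"
  shows "Cau u X \<le> Cau (u @ v) X"
  using assms by (simp add: Cau_append zero_le_even_power)

lemma Cau_concat_nonneg:
  assumes "\<forall>w\<in>set ws. even (length w) \<and> 0 \<le> Cau w X"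
  shows "0 \<le> Cau (concat ws) X"
  using assms by (induction ws) (auto intro: order_trans[OF _ Cau_append_ge])

lemma Cau_concat_eq_0:
  assumes "\<forall>w\<in>set ws. Cau w X = 0"
  shows "Cau (concat ws) X = 0"
  using assms by (induction ws) (simp_all add: Cau_append)

lemma Cau_concat_le_0_imp_eq_0:
  assumes "\<forall>w\<in>set ws. even (length w) \<and> 0 \<le> Cau w X" "X \<noteq> 0" "Cau (concat ws) X \<le> 0"
  shows "\<forall>w\<in>set ws. Cau w X = 0"
  using assms
proof (induction ws)
  case (Cons w ws)
  have w: "even (length w)" "0 \<le> Cau w X" and rest: "0 \<le> Cau (concat ws) X"
    using Cons.prems(1) Cau_concat_nonneg by auto
  have "0 < X ^ length w"
    using w(1) \<open>X \<noteq> 0\<close> by (simp add: zero_less_power_eq)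
  moreover have "Cau w X + X ^ length w * Cau (concat ws) X \<le> 0"
    using Cons.prems(3) by (simp add: Cau_append)
  moreover have "0 \<le> X ^ length w * Cau (concat ws) X"
    using w(1) rest by (simp add: zero_le_even_power)
  ultimately have "Cau w X = 0" "X ^ length w * Cau (concat ws) X = 0"
    using w(2) by linarith+
  moreover from this(2) have "Cau (concat ws) X = 0"
    using \<open>X \<noteq> 0\<close> by simp
  moreover have "\<forall>v\<in>set ws. Cau v X = 0"
    using Cons.prems(1,2) \<open>Cau (concat ws) X = 0\<close> by (intro Cons.IH) auto
  ultimately show ?case
    by simp
qed simp

definition blocks :: "nat \<Rightarrow> letter list list" where
  "blocks k = [fibR k, fibS k, fibT k]"

lemma even_length_blocks: "u \<in> set (blocks k) \<Longrightarrow> even (length u)"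
  using odd_length_fibA_fibB[of k] by (auto simp: blocks_def fibR_def fibS_def fibT_def)

lemma blocks_Suc:
  assumes "u \<in> set (blocks (Suc k))"
  obtains ws where "u = concat (fibR k # ws)" "set (fibR k # ws) = set (blocks k)"
proof -
  have "u \<in> {concat [fibR k, fibS k, fibT k, fibT k], concat [fibR k, fibS k, fibT k, fibT k, fibR k],
      concat [fibR k, fibS k, fibT k, fibR k]}"
    using assms by (simp add: blocks_def fibR_Suc fibS_Suc fibT_Suc)
  then show thesis
  proof (elim insertE emptyE)
    show "u = concat [fibR k, fibS k, fibT k, fibT k] \<Longrightarrow> thesis"
      by (rule that[of "[fibS k, fibT k, fibT k]"]) (simp_all add: blocks_def insert_commute)
    show "u = concat [fibR k, fibS k, fibT k, fibT k, fibR k] \<Longrightarrow> thesis"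
      by (rule that[of "[fibS k, fibT k, fibT k, fibR k]"]) (simp_all add: blocks_def insert_commute)
    show "u = concat [fibR k, fibS k, fibT k, fibR k] \<Longrightarrow> thesis"
      by (rule that[of "[fibS k, fibT k, fibR k]"]) (simp_all add: blocks_def insert_commute)
  qed
qed

definition blocks_pos :: "nat \<Rightarrow> real \<Rightarrow> bool" where
  "blocks_pos k X \<longleftrightarrow> (\<forall>u\<in>set (blocks k). 0 < Cau u X)"

definition blocks_nonneg :: "nat \<Rightarrow> real \<Rightarrow> bool" where
  "blocks_nonneg k X \<longleftrightarrow> (\<forall>u\<in>set (blocks k). 0 \<le> Cau u X)"

definition blocks_zero :: "nat \<Rightarrow> real \<Rightarrow> bool" where
  "blocks_zero k X \<longleftrightarrow> (\<forall>u\<in>set (blocks k). Cau u X = 0)"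

lemma blocks_pos_imp_nonneg: "blocks_pos k X \<Longrightarrow> blocks_nonneg k X"
  by (auto simp: blocks_pos_def blocks_nonneg_def less_imp_le)

lemma Cau_concat_blocks_nonneg:
  "blocks_nonneg k X \<Longrightarrow> set ws \<subseteq> set (blocks k) \<Longrightarrow> 0 \<le> Cau (concat ws) X"
  by (auto simp: blocks_nonneg_def intro: Cau_concat_nonneg even_length_blocks)

lemma blocks_pos_Suc:
  assumes "blocks_pos k X"
  shows "blocks_pos (Suc k) X"
  unfolding blocks_pos_def
proof
  fix u
  assume "u \<in> set (blocks (Suc k))"
  then obtain ws where u: "u = concat (fibR k # ws)" and ws: "set (fibR k # ws) = set (blocks k)"
    by (rule blocks_Suc)
  have R: "fibR k \<in> set (blocks k)"
    by (simp add: blocks_def)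
  have "0 < Cau (fibR k) X"
    using assms R by (simp add: blocks_pos_def)
  also have "Cau (fibR k) X \<le> Cau u X"
    unfolding u concat.simps
    using R ws blocks_pos_imp_nonneg[OF assms]
    by (intro Cau_append_ge even_length_blocks Cau_concat_blocks_nonneg) auto
  finally show "0 < Cau u X" .
qed

lemma blocks_nonneg_Suc: "blocks_nonneg k X \<Longrightarrow> blocks_nonneg (Suc k) X"
  unfolding blocks_nonneg_def[of "Suc k"]
  by (metis Cau_concat_blocks_nonneg blocks_Suc order_refl)

lemma blocks_zero_Suc: "blocks_zero k X \<Longrightarrow> blocks_zero (Suc k) X"
  unfolding blocks_zero_def
  by (metis Cau_concat_eq_0 blocks_Suc)

lemma blocks_zero_if_not_pos_Suc:
  assumes "blocks_nonneg k X" "X \<noteq> 0" "\<not> blocks_pos (Suc k) X"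
  shows "blocks_zero k X"
proof -
  obtain u where "u \<in> set (blocks (Suc k))" and u: "Cau u X \<le> 0"
    using assms(3) by (auto simp: blocks_pos_def not_less)
  from this(1) obtain ws where "u = concat (fibR k # ws)" and ws: "set (fibR k # ws) = set (blocks k)"
    by (rule blocks_Suc)
  then have "\<forall>w\<in>set (fibR k # ws). Cau w X = 0"
    using assms(1,2) u
    by (intro Cau_concat_le_0_imp_eq_0) (auto simp: blocks_nonneg_def even_length_blocks)
  then show ?thesis
    unfolding blocks_zero_def ws .
qed

lemma blocks_pos_0: "1 \<le> k \<Longrightarrow> blocks_pos k 0"
proof -
  assume "1 \<le> k"
  then have B: "fibB (3 * k) = fibA (3 * k - 1)"
    by (metis Suc_diff_1 fibB_Suc less_le_trans mult_pos_pos zero_less_numeral zero_less_one)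
  obtain v v' where "fibA (3 * k) = La # v" "fibA (3 * k - 1) = La # v'"
    using fibA_hd by metis
  then show ?thesis
    by (simp add: blocks_pos_def blocks_def fibR_def fibS_def fibT_def B ind_a_def)
qed

lemma eventually_blocks_pos: "blocks_pos k x \<Longrightarrow> eventually (blocks_pos k) (at x)"
  unfolding blocks_pos_def
  by (intro eventually_ball_finite ballI order_tendstoD(1)[OF isCont_Cau[unfolded isCont_def]])
    auto

definition alpha_set :: "nat \<Rightarrow> real set" where
  "alpha_set k = {s \<in> {-1..<0}. \<forall>X\<in>{s<..<0}. blocks_pos k X}"

lemma alpha_eq_Inf: "alpha k = Inf (alpha_set k)"
  by (simp add: alpha_def alpha_set_def blocks_pos_def blocks_def)

lemma bdd_below_alpha_set: "bdd_below (alpha_set k)"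
  by (rule bdd_belowI[of _ "-1"]) (auto simp: alpha_set_def)

lemma alpha_set_nonempty: "1 \<le> k \<Longrightarrow> alpha_set k \<noteq> {}"
proof -
  assume "1 \<le> k"
  then have "eventually (blocks_pos k) (at_left 0)"
    using blocks_pos_0 eventually_blocks_pos eventually_at_split by blast
  then obtain b where "b < 0" "\<forall>X>b. X < 0 \<longrightarrow> blocks_pos k X"
    by (auto simp: eventually_at_left_field)
  then have "max b (-1) \<in> alpha_set k"
    by (auto simp: alpha_set_def)
  then show ?thesis
    by blast
qed

lemma alpha_bounds: "1 \<le> k \<Longrightarrow> -1 \<le> alpha k \<and> alpha k < 0"
proof -
  assume k: "1 \<le> k"
  then obtain s where s: "s \<in> alpha_set k"
    using alpha_set_nonempty by blast
  have "-1 \<le> alpha k"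
    unfolding alpha_eq_Inf using alpha_set_nonempty[OF k]
    by (rule cInf_greatest) (auto simp: alpha_set_def)
  moreover have "alpha k \<le> s"
    unfolding alpha_eq_Inf using s bdd_below_alpha_set by (rule cInf_lower)
  moreover have "s < 0"
    using s by (simp add: alpha_set_def)
  ultimately show ?thesis
    by simp
qed

lemma blocks_pos_above_alpha: "1 \<le> k \<Longrightarrow> X \<in> {alpha k<..<0} \<Longrightarrow> blocks_pos k X"
proof -
  assume "1 \<le> k" "X \<in> {alpha k<..<0}"
  then obtain s where "s \<in> alpha_set k" "s < X" "X < 0"
    using cInf_less_iff[OF alpha_set_nonempty bdd_below_alpha_set] by (auto simp: alpha_eq_Inf)
  then show ?thesis
    by (auto simp: alpha_set_def)
qed

lemma alpha_Suc_le: "1 \<le> k \<Longrightarrow> alpha (Suc k) \<le> alpha k"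
  unfolding alpha_eq_Inf
  by (rule cInf_superset_mono[OF alpha_set_nonempty bdd_below_alpha_set])
    (auto simp: alpha_set_def blocks_pos_Suc)

lemma alpha_antimono:
  assumes "1 \<le> n" "n \<le> m"
  shows "alpha m \<le> alpha n"
  using assms(2)
proof (induction m rule: dec_induct)
  case (step m)
  then show ?case
    using alpha_Suc_le[of m] assms(1) by simp
qed simp

lemma blocks_nonneg_at_alpha: "1 \<le> k \<Longrightarrow> blocks_nonneg k (alpha k)"
proof -
  assume k: "1 \<le> k"
  have pos: "eventually (blocks_pos k) (at_right (alpha k))"
    using eventually_at_right_real[of "alpha k" 0] alpha_bounds[OF k]
    by (auto elim!: eventually_mono intro: blocks_pos_above_alpha[OF k])
  show ?thesis
    unfolding blocks_nonneg_def
  proof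
    fix u
    assume u: "u \<in> set (blocks k)"
    have "(Cau u \<longlongrightarrow> Cau u (alpha k)) (at_right (alpha k))"
      using isCont_Cau[where u=u, unfolded isCont_def] by (rule tendsto_mono[rotated]) (simp add: at_le)
    moreover have "eventually (\<lambda>X. 0 \<le> Cau u X) (at_right (alpha k))"
      using pos u by (auto simp: blocks_pos_def less_imp_le elim!: eventually_mono)
    ultimately show "0 \<le> Cau u (alpha k)"
      by (rule tendsto_lowerbound) simp
  qed
qed

lemma blocks_zero_mono: "n \<le> m \<Longrightarrow> blocks_zero n X \<Longrightarrow> blocks_zero m X"
  by (induction m rule: dec_induct) (simp_all add: blocks_zero_Suc)

lemma blocks_zero_imp_not_pos: "blocks_zero k X \<Longrightarrow> \<not> blocks_pos k X"
  by (simp add: blocks_zero_def blocks_pos_def blocks_def)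

lemma blocks_zero_at_alpha:
  assumes k: "1 \<le> k" and eq: "alpha (Suc k) = alpha k" and gt: "-1 < alpha k"
  shows "blocks_zero k (alpha k)"
proof -
  have "\<not> blocks_pos (Suc k) (alpha k)"
  proof
    assume pos: "blocks_pos (Suc k) (alpha k)"
    then have "eventually (blocks_pos (Suc k)) (at_left (alpha k))"
      using eventually_blocks_pos eventually_at_split by blast
    then obtain b where b: "b < alpha k" "\<forall>X>b. X < alpha k \<longrightarrow> blocks_pos (Suc k) X"
      by (auto simp: eventually_at_left_field)
    have "blocks_pos (Suc k) X" if "X \<in> {max b (-1)<..<0}" for X
    proof (cases X "alpha k" rule: linorder_cases)
      case greater
      then show ?thesis
        using that blocks_pos_above_alpha[of "Suc k" X] eq by simp
    qed (use that b pos in auto)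
    then have "max b (-1) \<in> alpha_set (Suc k)"
      using b gt alpha_bounds[OF k] by (simp add: alpha_set_def)
    then have "alpha (Suc k) \<le> max b (-1)"
      unfolding alpha_eq_Inf using bdd_below_alpha_set by (rule cInf_lower)
    then show False
      using b gt eq by simp
  qed
  then show ?thesis
    using blocks_zero_if_not_pos_Suc blocks_nonneg_at_alpha[OF k] alpha_bounds[OF k] by simp
qed

lemma alpha_stationary:
  assumes n: "1 \<le> n" and eq: "alpha (Suc n) = alpha n" and gt: "-1 < alpha n" and m: "n \<le> m"
  shows "alpha m = alpha n \<and> blocks_zero m (alpha n)"
proof -
  have zero: "blocks_zero m (alpha n)"
    using blocks_zero_mono[OF m blocks_zero_at_alpha[OF n eq gt]] .
  have "\<not> alpha m < alpha n"
    using blocks_pos_above_alpha[of m "alpha n"] blocks_zero_imp_not_pos[OF zero]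
      alpha_bounds[OF n] n m by auto
  then show ?thesis
    using alpha_antimono[OF n m] zero by simp
qed

lemma summable_Ca: "\<bar>X\<bar> < 1 \<Longrightarrow> summable (\<lambda>i. ind_a (fibw i) * X ^ i)"
  by (rule summable_comparison_test[OF _ summable_geometric[of "\<bar>X\<bar>"]])
    (auto simp: ind_a_def abs_mult power_abs)

lemma fibR_eq_fibA: "fibR k = fibA (Suc (3 * k))"
  by (simp add: fibR_def fibA_Suc)

lemma Cau_fibR_eq_sum: "Cau (fibR k) X = (\<Sum>i<length (fibR k). ind_a (fibw i) * X ^ i)"
  unfolding Cau_def fibR_eq_fibA by (intro sum.cong refl) (simp add: fibw_eq_nth_fibA)

lemma strict_mono_length_fibR: "strict_mono (\<lambda>k. length (fibR k))"
  unfolding strict_mono_Suc_iff by (simp add: fibR_Suc fibS_def fibA_ne_Nil)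

lemma Cau_fibR_tendsto_Ca: "\<bar>X\<bar> < 1 \<Longrightarrow> (\<lambda>k. Cau (fibR k) X) \<longlonglongrightarrow> Ca X"
  using LIMSEQ_subseq_LIMSEQ[OF summable_LIMSEQ[OF summable_Ca] strict_mono_length_fibR]
  unfolding Ca_def o_def Cau_fibR_eq_sum .

lemma Cau_fibR_mono:
  assumes "n \<le> m" "\<forall>k\<ge>n. blocks_nonneg k X"
  shows "Cau (fibR n) X \<le> Cau (fibR m) X"
  using assms(1)
proof (induction m rule: dec_induct)
  case (step m)
  have "Cau (fibR m) X \<le> Cau (fibR m @ concat [fibS m, fibT m, fibT m]) X"
    using assms(2) step(1)
    by (intro Cau_append_ge even_length_blocks Cau_concat_blocks_nonneg) (auto simp: blocks_def)
  then show ?case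
    using step(3) by (simp add: fibR_Suc)
qed simp

lemma Ca_pos_nonneg:
  assumes "0 \<le> X" "X < 1"
  shows "0 < Ca X"
  unfolding Ca_def
proof (rule suminf_pos2[where i = 0])
  show "summable (\<lambda>i. ind_a (fibw i) * X ^ i)"
    using assms by (intro summable_Ca) simp
qed (use assms in \<open>simp_all add: ind_a_def fibw_def fibA_Suc\<close>)

lemma Ca_pos:
  assumes n: "1 \<le> n" and X: "X \<in> {alpha n<..<1}"
  shows "0 < Ca X"
proof (cases "0 \<le> X")
  case False
  then have pos: "blocks_pos k X" if "n \<le> k" for k
    using X blocks_pos_above_alpha[of k X] alpha_antimono[OF n that] n that by simp
  have "\<bar>X\<bar> < 1"
    using X alpha_bounds[OF n] by auto
  then have "Cau (fibR n) X \<le> Ca X"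
    using Cau_fibR_mono pos blocks_pos_imp_nonneg
    by (intro LIMSEQ_le_const[OF Cau_fibR_tendsto_Ca]) blast+
  moreover have "0 < Cau (fibR n) X"
    using pos[of n] by (simp add: blocks_pos_def blocks_def)
  ultimately show ?thesis
    by simp
qed (use X Ca_pos_nonneg in auto)

lemma Ca_eq_0:
  assumes "\<bar>X\<bar> < 1" "blocks_zero n X"
  shows "Ca X = 0"
proof -
  have "eventually (\<lambda>k. Cau (fibR k) X = 0) sequentially"
    using blocks_zero_mono[OF _ assms(2)]
    by (auto simp: eventually_sequentially blocks_zero_def blocks_def)
  then have "(\<lambda>k. 0) \<longlonglongrightarrow> Ca X"
    by (rule Lim_transform_eventually[OF Cau_fibR_tendsto_Ca[OF assms(1)]])
  then show ?thesis
    using LIMSEQ_const_iff by metis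
qed

lemma blocks_zero_iff:
  "blocks_zero k X \<longleftrightarrow> Cau (fibR k) X = 0 \<and> Cau (fibS k) X = 0 \<and> Cau (fibT k) X = 0"
  by (simp add: blocks_zero_def blocks_def)

lemma alpha_Suc_eq_iff:
  assumes "1 \<le> n"
  shows "alpha (Suc n) = alpha n \<longleftrightarrow> (\<forall>m\<ge>n. alpha m = -1)
    \<or> (\<forall>m\<ge>n. alpha m = alpha n) \<and> -1 < alpha n \<and> (\<forall>m\<ge>n. blocks_zero m (alpha m))"
proof
  assume eq: "alpha (Suc n) = alpha n"
  have below: "-1 \<le> alpha m \<and> alpha m \<le> alpha n" if "n \<le> m" for m
    using alpha_bounds[of m] alpha_antimono[OF assms that] assms that by simp
  show "(\<forall>m\<ge>n. alpha m = -1)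
    \<or> (\<forall>m\<ge>n. alpha m = alpha n) \<and> -1 < alpha n \<and> (\<forall>m\<ge>n. blocks_zero m (alpha m))"
  proof (cases "alpha n = -1")
    case True
    then have "\<forall>m\<ge>n. alpha m = -1"
      using below by (intro allI impI order_antisym) auto
    then show ?thesis ..
  next
    case False
    then have "-1 < alpha n"
      using below[of n] by simp
    then have "alpha m = alpha n \<and> blocks_zero m (alpha m)" if "n \<le> m" for m
      using alpha_stationary[OF assms eq _ that] by simp
    with \<open>-1 < alpha n\<close> show ?thesis
      by blast
  qed
next
  have "alpha (Suc n) = alpha n" if "\<forall>m\<ge>n. alpha m = c" for c
    using that[rule_format, of n] that[rule_format, of "Suc n"] by simp
  then show "(\<forall>m\<ge>n. alpha m = -1) \<or> (\<forall>m\<ge>n. alpha m = alpha n) \<and> -1 < alpha n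
      \<and> (\<forall>m\<ge>n. blocks_zero m (alpha m)) \<Longrightarrow> alpha (Suc n) = alpha n"
    by blast
qed

theorem proposition5p9:
  fixes n :: nat
  assumes "n \<ge> 1"
  shows "alpha (Suc n) \<le> alpha n
    \<and> (alpha (Suc n) = alpha n \<longleftrightarrow>
         ((\<forall>m\<ge>n. alpha m = -1)
          \<or> ((\<forall>m\<ge>n. alpha m = alpha n) \<and> alpha n > -1
             \<and> (\<forall>m\<ge>n. Cau (fibR m) (alpha m) = 0 \<and> Cau (fibS m) (alpha m) = 0
                          \<and> Cau (fibT m) (alpha m) = 0))))
    \<and> ((\<forall>m\<ge>n. alpha m = -1) \<longrightarrow> (\<forall>X\<in>{-1<..<1}. Ca X > 0))
    \<and> (((\<forall>m\<ge>n. alpha m = alpha n) \<and> alpha n > -1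
         \<and> (\<forall>m\<ge>n. Cau (fibR m) (alpha m) = 0 \<and> Cau (fibS m) (alpha m) = 0
                      \<and> Cau (fibT m) (alpha m) = 0))
       \<longrightarrow> Ca (alpha n) = 0 \<and> (\<forall>X\<in>{alpha n<..<1}. Ca X > 0))"
proof -
  have Ca_pos_above: "\<forall>X\<in>{alpha n<..<1}. 0 < Ca X"
    using Ca_pos[OF assms] by blast
  have "Ca (alpha n) = 0" if "-1 < alpha n" "blocks_zero n (alpha n)"
    using alpha_bounds[OF assms] that by (intro Ca_eq_0) auto
  then have case_b: "Ca (alpha n) = 0 \<and> (\<forall>X\<in>{alpha n<..<1}. 0 < Ca X)"
    if "(\<forall>m\<ge>n. alpha m = alpha n) \<and> -1 < alpha n \<and> (\<forall>m\<ge>n. blocks_zero m (alpha m))"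
    using that Ca_pos_above by blast
  have case_a: "\<forall>X\<in>{-1<..<1}. 0 < Ca X" if "\<forall>m\<ge>n. alpha m = -1"
    using Ca_pos_above that[rule_format, OF order_refl] by simp
  show ?thesis
    unfolding blocks_zero_iff[symmetric]
    using alpha_Suc_le[OF assms] alpha_Suc_eq_iff[OF assms] case_a case_b by blast
qed

end
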